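(* If $G$ is a circulant graph, then $\operatorname{stww}(G)\leq 3\Delta(G)+1$.
   Context: All graphs are finite and simple. A graph $G$ is circulant if there is an automorphism $\varphi$ of $G$ such that for any two vertices $v,w$ there is $j\in\mathbb{N}$ with $\varphi^j(v)=w$. $\Delta(G)$ is the maximum degree. A trigraph is a graph whose edges are each colored red or black; a graph is viewed as a trigraph with all edges black. The red degree of a vertex is the number of red edges incident to it. For a partition $\mathcal{P}$ of $V(G)$, the quotient trigraph $G/\mathcal{P}$ has vertex set $\mathcal{P}$; two distinct parts $U,W$ are joined by a black edge if every pair $\{u,w\}$ with $u\in U,w\in W$ is a black edge of $G$, are non-adjacent if no such pair is an edge of $G$, and are joined by a red edge otherwise. A contraction sequence of an $n$-vertex trigraph $G$ is a sequence $\mathcal{P}_n,\dots,\mathcal{P}_1$ of partitions of $V(G)$ where $\mathcal{P}_n$ is the partition into singletons and each $\mathcal{P}_i$ arises from $\mathcal{P}_{i+1}$ by merging two parts; its width is the maximum red degree over all $G/\mathcal{P}_i$, and the twin-width $\operatorname{tww}(G)$ is the minimum width of a contraction sequence. The sparse twin-width is $\operatorname{stww}(G)\coloneqq\operatorname{tww}(G_{\mathrm{red}})$, where $G_{\mathrm{red}}$ is the trigraph obtained from $G$ by coloring all edges red. *)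

theory Defs
  imports Main
begin

definition simple_graph :: "'a set \<Rightarrow> 'a set set \<Rightarrow> bool" where
  "simple_graph V E \<longleftrightarrow> finite V \<and>
     (\<forall>e\<in>E. \<exists>u v. u \<noteq> v \<and> u \<in> V \<and> v \<in> V \<and> e = {u, v})"

definition degree :: "'a set \<Rightarrow> 'a set set \<Rightarrow> 'a \<Rightarrow> nat" where
  "degree V E v = card {w \<in> V. {v, w} \<in> E}"

definition max_degree :: "'a set \<Rightarrow> 'a set set \<Rightarrow> nat" where
  "max_degree V E = Max (insert 0 (degree V E ` V))"

definition automorphism :: "'a set \<Rightarrow> 'a set set \<Rightarrow> ('a \<Rightarrow> 'a) \<Rightarrow> bool" where
  "automorphism V E \<phi> \<longleftrightarrow> bij_betw \<phi> V V \<and>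
     (\<forall>u\<in>V. \<forall>v\<in>V. {u, v} \<in> E \<longleftrightarrow> {\<phi> u, \<phi> v} \<in> E)"

definition circulant :: "'a set \<Rightarrow> 'a set set \<Rightarrow> bool" where
  "circulant V E \<longleftrightarrow> (\<exists>\<phi>. automorphism V E \<phi> \<and>
     (\<forall>v\<in>V. \<forall>w\<in>V. \<exists>j::nat. (\<phi> ^^ j) v = w))"

text \<open>A trigraph is given by a vertex set V, black edges B and red edges R
  (disjoint sets of 2-element subsets of V).\<close>

definition quot_black :: "'a set set \<Rightarrow> 'a set \<Rightarrow> 'a set \<Rightarrow> bool" where
  "quot_black B U W \<longleftrightarrow> (\<forall>u\<in>U. \<forall>w\<in>W. {u, w} \<in> B)"

definition quot_nonadj :: "'a set set \<Rightarrow> 'a set set \<Rightarrow> 'a set \<Rightarrow> 'a set \<Rightarrow> bool" where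
  "quot_nonadj B R U W \<longleftrightarrow> (\<forall>u\<in>U. \<forall>w\<in>W. {u, w} \<notin> B \<and> {u, w} \<notin> R)"

definition quot_red :: "'a set set \<Rightarrow> 'a set set \<Rightarrow> 'a set \<Rightarrow> 'a set \<Rightarrow> bool" where
  "quot_red B R U W \<longleftrightarrow> \<not> quot_black B U W \<and> \<not> quot_nonadj B R U W"

definition quot_red_degree ::
  "'a set set \<Rightarrow> 'a set set \<Rightarrow> 'a set set \<Rightarrow> 'a set \<Rightarrow> nat" where
  "quot_red_degree B R P U = card {W \<in> P. W \<noteq> U \<and> quot_red B R U W}"

definition max_quot_red_degree :: "'a set set \<Rightarrow> 'a set set \<Rightarrow> 'a set set \<Rightarrow> nat" where
  "max_quot_red_degree B R P = Max (insert 0 (quot_red_degree B R P ` P))"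

text \<open>A contraction sequence P_n, ..., P_1 (n = |V|), represented as a function
  on indices 1..n.\<close>
definition contraction_sequence :: "'a set \<Rightarrow> (nat \<Rightarrow> 'a set set) \<Rightarrow> bool" where
  "contraction_sequence V P \<longleftrightarrow>
     P (card V) = (\<lambda>v. {v}) ` V \<and>
     (\<forall>i. 1 \<le> i \<and> i < card V \<longrightarrow>
        (\<exists>X\<in>P (Suc i). \<exists>Y\<in>P (Suc i). X \<noteq> Y \<and>
            P i = (P (Suc i) - {X, Y}) \<union> {X \<union> Y}))"

definition cs_width :: "'a set \<Rightarrow> 'a set set \<Rightarrow> 'a set set \<Rightarrow> (nat \<Rightarrow> 'a set set) \<Rightarrow> nat" where
  "cs_width V B R P = Max (insert 0 ((\<lambda>i. max_quot_red_degree B R (P i)) ` {1..card V}))"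

definition tww :: "'a set \<Rightarrow> 'a set set \<Rightarrow> 'a set set \<Rightarrow> nat" where
  "tww V B R = (LEAST d. \<exists>P. contraction_sequence V P \<and> cs_width V B R P = d)"

definition stww :: "'a set \<Rightarrow> 'a set set \<Rightarrow> nat" where
  "stww V E = tww V {} E"

end

theory Submission
  imports Defs
begin

text \<open>
  Label the vertices \<open>0, \<dots>, n - 1\<close> along the orbit of one vertex under the cyclic automorphism.
  Then every edge joins \<open>i\<close> and \<open>i + s mod n\<close> for some \<open>s\<close> in a connection set \<open>S\<close> with
  \<open>|S| \<le> \<Delta>\<close>. Contract along the cycle into intervals, deleting cut points one at a time so that
  at every stage, for some \<open>r\<close>, all cuts are multiples of \<open>2^r\<close> and all multiples of \<open>2^(r+1)\<close>
  are cuts. Every interval then lies in an aligned window of length \<open>2^(r+1)\<close>, and every interval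
  except the last one is a union of aligned runs of length \<open>2^r\<close>. The red neighbours of an interval
  reached by the offset \<open>s\<close> are met by a cyclic walk of length \<open>2^(r+1)\<close>, which enters a new
  interval other than the last at most once every \<open>2^r\<close> steps and so meets at most three of them.
  Hence every red degree is at most \<open>3 |S| + 1\<close>.
\<close>

section \<open>Interval partitions of a cycle\<close>

text \<open>The blocks \<open>cut_blocks n C\<close> partition \<open>{..<n}\<close> into intervals; a cut \<open>c \<in> C\<close> separates
  \<open>c - 1\<close> from \<open>c\<close>.\<close>
definition cut_block :: "nat \<Rightarrow> nat set \<Rightarrow> nat \<Rightarrow> nat set" where
  "cut_block n C x = {y. y < n \<and> (\<forall>c\<in>C. c \<le> x \<longleftrightarrow> c \<le> y)}"

definition cut_blocks :: "nat \<Rightarrow> nat set \<Rightarrow> nat set set" where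
  "cut_blocks n C = cut_block n C ` {..<n}"

lemma cut_block_subset: "cut_block n C x \<subseteq> {..<n}"
  by (auto simp: cut_block_def)

lemma cut_block_self: "x < n \<Longrightarrow> x \<in> cut_block n C x"
  by (auto simp: cut_block_def)

lemma cut_block_eq: "y \<in> cut_block n C x \<Longrightarrow> cut_block n C y = cut_block n C x"
  by (auto simp: cut_block_def)

lemma cut_blocks_eq_cut_block: "B \<in> cut_blocks n C \<Longrightarrow> y \<in> B \<Longrightarrow> B = cut_block n C y"
  by (auto simp: cut_blocks_def dest: cut_block_eq)

lemma finite_cut_blocks: "finite (cut_blocks n C)"
  by (simp add: cut_blocks_def)

lemma cut_blocks_subset_Pow: "cut_blocks n C \<subseteq> Pow {..<n}"
  using cut_block_subset by (auto simp: cut_blocks_def)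

lemma cut_blocks_all_cuts: "cut_blocks n {1..<n} = (\<lambda>x. {x}) ` {..<n}"
proof -
  have "cut_block n {1..<n} x = {x}" if "x < n" for x
  proof (intro set_eqI iffI)
    fix y assume "y \<in> cut_block n {1..<n} x"
    then have "y < n" and cuts: "\<And>c. 1 \<le> c \<Longrightarrow> c < n \<Longrightarrow> c \<le> x \<longleftrightarrow> c \<le> y"
      by (auto simp: cut_block_def)
    show "y \<in> {x}"
    proof (cases x y rule: linorder_cases)
      case less then show ?thesis using cuts[of y] \<open>y < n\<close> by simp
    next
      case greater then show ?thesis using cuts[of x] \<open>x < n\<close> by simp
    qed simp
  qed (use that in \<open>auto simp: cut_block_def\<close>)
  then show ?thesis by (auto simp: cut_blocks_def)
qed

lemma cut_block_remove_cut_merged: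
  assumes c: "c \<in> C" and C: "C \<subseteq> {1..<n}"
    and x: "x \<in> cut_block n C (c - 1) \<union> cut_block n C c"
  shows "cut_block n (C - {c}) x = cut_block n C (c - 1) \<union> cut_block n C c"
proof -
  have c1: "1 \<le> c" "c < n" using c C by auto
  have other: "\<And>c'. c' \<in> C \<Longrightarrow> c' \<noteq> c \<Longrightarrow> c' \<le> c - 1 \<longleftrightarrow> c' \<le> c" using c1 by auto
  have xc: "\<And>c'. c' \<in> C \<Longrightarrow> c' \<noteq> c \<Longrightarrow> c' \<le> x \<longleftrightarrow> c' \<le> c"
    using x other by (auto simp: cut_block_def)
  show ?thesis
  proof (intro set_eqI iffI)
    fix y assume "y \<in> cut_block n (C - {c}) x"
    then have yn: "y < n" and yc: "\<And>c'. c' \<in> C \<Longrightarrow> c' \<noteq> c \<Longrightarrow> c' \<le> y \<longleftrightarrow> c' \<le> c"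
      using xc by (auto simp: cut_block_def)
    show "y \<in> cut_block n C (c - 1) \<union> cut_block n C c"
    proof (cases "c \<le> y")
      case True
      then have "y \<in> cut_block n C c" using yn yc by (auto simp: cut_block_def)
      then show ?thesis by blast
    next
      case False
      then have "c' \<le> c - 1 \<longleftrightarrow> c' \<le> y" if "c' \<in> C" for c'
        using yc[OF that] other[OF that] c1 by (cases "c' = c") auto
      then have "y \<in> cut_block n C (c - 1)" using yn by (auto simp: cut_block_def)
      then show ?thesis by blast
    qed
  next
    fix y assume "y \<in> cut_block n C (c - 1) \<union> cut_block n C c"
    then show "y \<in> cut_block n (C - {c}) x"
      using other xc by (auto simp: cut_block_def)
  qed
qed

lemma cut_block_remove_cut_other:
  assumes c: "c \<in> C" and C: "C \<subseteq> {1..<n}"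
    and x: "x < n" "x \<notin> cut_block n C (c - 1) \<union> cut_block n C c"
  shows "cut_block n (C - {c}) x = cut_block n C x"
proof (intro set_eqI iffI)
  fix y assume y: "y \<in> cut_block n (C - {c}) x"
  have "c \<le> x \<longleftrightarrow> c \<le> y"
  proof (cases "c \<le> x")
    case True
    from x have "x \<notin> cut_block n C c" by blast
    then obtain c' where "c' \<in> C" "\<not> (c' \<le> c \<longleftrightarrow> c' \<le> x)" using x(1) by (auto simp: cut_block_def)
    then have "c < c'" "c' \<le> x" "c' \<in> C - {c}" using True by auto
    moreover have "c' \<le> x \<longleftrightarrow> c' \<le> y" using y \<open>c' \<in> C - {c}\<close> by (simp add: cut_block_def)
    ultimately have "c' \<le> y" by simp
    then show ?thesis using True \<open>c < c'\<close> by simp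
  next
    case False
    from x have "x \<notin> cut_block n C (c - 1)" by blast
    then obtain c' where "c' \<in> C" "\<not> (c' \<le> c - 1 \<longleftrightarrow> c' \<le> x)" using x(1) by (auto simp: cut_block_def)
    then have "x < c'" "c' < c" "c' \<in> C - {c}" using False C c by auto
    moreover have "c' \<le> x \<longleftrightarrow> c' \<le> y" using y \<open>c' \<in> C - {c}\<close> by (simp add: cut_block_def)
    ultimately have "\<not> c' \<le> y" by simp
    then show ?thesis using False \<open>c' < c\<close> by simp
  qed
  then show "y \<in> cut_block n C x" using y by (auto simp: cut_block_def)
qed (auto simp: cut_block_def)

lemma cut_blocks_remove_cut:
  assumes c: "c \<in> C" and C: "C \<subseteq> {1..<n}"
  shows "\<exists>X\<in>cut_blocks n C. \<exists>Y\<in>cut_blocks n C. X \<noteq> Y \<and>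
           cut_blocks n (C - {c}) = (cut_blocks n C - {X, Y}) \<union> {X \<union> Y}"
proof -
  have c1: "1 \<le> c" "c < n" using c C by auto
  let ?X = "cut_block n C (c - 1)" and ?Y = "cut_block n C c"
  have XY: "?X \<in> cut_blocks n C" "?Y \<in> cut_blocks n C" using c1 by (auto simp: cut_blocks_def)
  have "c - 1 \<notin> ?Y" using c c1 by (auto simp: cut_block_def intro!: bexI[of _ c])
  moreover have "c - 1 \<in> ?X" using cut_block_self c1 by simp
  ultimately have ne: "?X \<noteq> ?Y" by blast
  have "cut_blocks n (C - {c}) = (cut_blocks n C - {?X, ?Y}) \<union> {?X \<union> ?Y}"
  proof (intro set_eqI iffI)
    fix Z assume "Z \<in> cut_blocks n (C - {c})"
    then obtain x where x: "x < n" "Z = cut_block n (C - {c}) x" by (auto simp: cut_blocks_def)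
    show "Z \<in> (cut_blocks n C - {?X, ?Y}) \<union> {?X \<union> ?Y}"
    proof (cases "x \<in> ?X \<union> ?Y")
      case True then show ?thesis using cut_block_remove_cut_merged[OF c C True] x by simp
    next
      case False
      then have "cut_block n C x \<noteq> ?X" "cut_block n C x \<noteq> ?Y" using cut_block_self[OF x(1)] by auto
      then show ?thesis using cut_block_remove_cut_other[OF c C x(1) False] x
        by (auto simp: cut_blocks_def)
    qed
  next
    fix Z assume Z: "Z \<in> (cut_blocks n C - {?X, ?Y}) \<union> {?X \<union> ?Y}"
    show "Z \<in> cut_blocks n (C - {c})"
    proof (cases "Z = ?X \<union> ?Y")
      case True
      then have "Z = cut_block n (C - {c}) c"
        using cut_block_remove_cut_merged[OF c C, of c] cut_block_self[OF c1(2)] by auto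
      then show ?thesis using c1 by (auto simp: cut_blocks_def)
    next
      case False
      then obtain x where x: "x < n" "Z = cut_block n C x" "Z \<noteq> ?X" "Z \<noteq> ?Y"
        using Z by (auto simp: cut_blocks_def)
      then have "x \<notin> ?X \<union> ?Y" using cut_block_eq by blast
      then have "Z = cut_block n (C - {c}) x" using cut_block_remove_cut_other[OF c C x(1)] x by simp
      then show ?thesis using x by (auto simp: cut_blocks_def)
    qed
  qed
  then show ?thesis using XY ne by blast
qed

section \<open>Dyadic cut sets\<close>

text \<open>Under this invariant every block lies in an aligned window of length \<open>2^(r+1)\<close>,
  and every block avoiding \<open>n - 1\<close> is a union of aligned runs of length \<open>2^r\<close>.\<close>
definition dyadic_cuts :: "nat \<Rightarrow> nat \<Rightarrow> nat set \<Rightarrow> bool" where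
  "dyadic_cuts n r C \<longleftrightarrow> C \<subseteq> {1..<n} \<and> (\<forall>c\<in>C. 2^r dvd c) \<and>
     (\<forall>y. 0 < y \<and> y < n \<and> 2^Suc r dvd y \<longrightarrow> y \<in> C)"

text \<open>Either some cut is not a multiple of \<open>2^(r+1)\<close> and can be removed, or the invariant
  already holds for \<open>r + 1\<close>.\<close>
lemma dyadic_cuts_remove_cut:
  assumes "dyadic_cuts n r C" "C \<noteq> {}"
  shows "\<exists>c\<in>C. \<exists>r'. dyadic_cuts n r' (C - {c})"
  using assms
proof (induction "n - 2^r" arbitrary: r rule: less_induct)
  case less
  show ?case
  proof (cases "\<exists>c\<in>C. \<not> 2^Suc r dvd c")
    case True
    then obtain c where "c \<in> C" "\<not> 2^Suc r dvd c" by blast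
    then have "dyadic_cuts n r (C - {c})" using less.prems(1) by (auto simp: dyadic_cuts_def)
    then show ?thesis using \<open>c \<in> C\<close> by blast
  next
    case False
    then have coarser: "dyadic_cuts n (Suc r) C" using less.prems(1) unfolding dyadic_cuts_def
      by (metis dvd_trans le_imp_power_dvd le_add2 plus_1_eq_Suc)
    obtain c where "c \<in> C" using less.prems(2) by blast
    then have "2^Suc r dvd c" "0 < c" "c < n" using False less.prems(1) by (auto simp: dyadic_cuts_def)
    then have "2^Suc r < n" using dvd_imp_le order.strict_trans1 by blast
    then have "n - 2^Suc r < n - 2^r" by (simp add: diff_less_mono2)
    then show ?thesis using less.hyps coarser less.prems(2) by blast
  qed
qed

lemma dyadic_cut_sequence:
  obtains D where "D 0 = {1..<n}" and "\<And>k. \<exists>r. dyadic_cuts n r (D k)"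
    and "\<And>k. k < n - 1 \<Longrightarrow> \<exists>c\<in>D k. D (Suc k) = D k - {c}"
proof -
  have "\<forall>C. \<exists>c. (\<exists>r. dyadic_cuts n r C) \<and> C \<noteq> {} \<longrightarrow> c \<in> C \<and> (\<exists>r. dyadic_cuts n r (C - {c}))"
    using dyadic_cuts_remove_cut by blast
  then obtain pick where pick: "\<And>C r. dyadic_cuts n r C \<Longrightarrow> C \<noteq> {} \<Longrightarrow>
      pick C \<in> C \<and> (\<exists>r'. dyadic_cuts n r' (C - {pick C}))"
    by metis
  define D where "D k = ((\<lambda>C. C - {pick C}) ^^ k) {1..<n}" for k
  have D_Suc: "D (Suc k) = D k - {pick (D k)}" for k by (simp add: D_def)
  have D: "(\<exists>r. dyadic_cuts n r (D k)) \<and> card (D k) = n - 1 - k" for k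
  proof (induction k)
    case 0
    have "dyadic_cuts n 0 {1..<n}" by (auto simp: dyadic_cuts_def)
    then show ?case by (auto simp: D_def)
  next
    case (Suc k)
    then obtain r where r: "dyadic_cuts n r (D k)" by blast
    have fin: "finite (D k)" using r finite_subset by (auto simp: dyadic_cuts_def)
    show ?case
    proof (cases "D k = {}")
      case True then show ?thesis using Suc r by (simp add: D_Suc)
    next
      case False then show ?thesis using pick[OF r] Suc fin by (simp add: D_Suc)
    qed
  qed
  have step: "\<exists>c\<in>D k. D (Suc k) = D k - {c}" if "k < n - 1" for k
  proof -
    obtain r where "dyadic_cuts n r (D k)" using D by blast
    moreover have "D k \<noteq> {}" using D[of k] that by auto
    ultimately show ?thesis using pick D_Suc by blast
  qed
  show thesis
  proof (rule that[of D])
    show "D 0 = {1..<n}" by (simp add: D_def)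
    show "\<exists>r. dyadic_cuts n r (D k)" for k using D by blast
  qed (rule step)
qed

lemma dyadic_contraction_sequence:
  obtains Q where "contraction_sequence {..<n} Q"
    and "\<And>i. \<exists>C r. dyadic_cuts n r C \<and> Q i = cut_blocks n C"
proof -
  obtain D where D0: "D 0 = {1..<n}" and dyadic: "\<And>k. \<exists>r. dyadic_cuts n r (D k)"
    and D_Suc: "\<And>k. k < n - 1 \<Longrightarrow> \<exists>c\<in>D k. D (Suc k) = D k - {c}"
    using dyadic_cut_sequence[of n] by blast
  define Q where "Q i = cut_blocks n (D (n - i))" for i
  have "contraction_sequence {..<n} Q"
    unfolding contraction_sequence_def
  proof (intro conjI allI impI)
    show "Q (card {..<n}) = (\<lambda>v. {v}) ` {..<n}"
      using cut_blocks_all_cuts[of n] by (simp add: Q_def D0)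
  next
    fix i assume i: "1 \<le> i \<and> i < card {..<n}"
    then have "n - i = Suc (n - Suc i)" "n - Suc i < n - 1" by auto
    then obtain c where c: "c \<in> D (n - Suc i)" and "D (n - i) = D (n - Suc i) - {c}"
      using D_Suc by metis
    moreover have "D (n - Suc i) \<subseteq> {1..<n}" using dyadic by (auto simp: dyadic_cuts_def)
    ultimately show "\<exists>X\<in>Q (Suc i). \<exists>Y\<in>Q (Suc i). X \<noteq> Y \<and> Q i = Q (Suc i) - {X, Y} \<union> {X \<union> Y}"
      using cut_blocks_remove_cut[OF c] unfolding Q_def by simp
  qed
  moreover have "\<exists>C r. dyadic_cuts n r C \<and> Q i = cut_blocks n C" for i
    unfolding Q_def using dyadic by blast
  ultimately show thesis by (rule that)
qed

section \<open>Red neighbours of an interval\<close>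

lemma cut_block_subset_dyadic_window:
  assumes cuts: "dyadic_cuts n r C" and x: "x < n"
  defines "q \<equiv> x div 2^Suc r * 2^Suc r"
  shows "cut_block n C x \<subseteq> {q..<q + 2^Suc r}"
proof
  fix y assume y: "y \<in> cut_block n C x"
  have "q + x mod 2^Suc r = x" unfolding q_def by (rule div_mult_mod_eq)
  moreover have "x mod 2^Suc r < 2^Suc r" by simp
  ultimately have xq: "q \<le> x" "x < q + 2^Suc r" by linarith+
  have q_dvd: "2^Suc r dvd q" by (simp add: q_def)
  have yn: "y < n" and same_side: "\<And>c. c \<in> C \<Longrightarrow> c \<le> x \<longleftrightarrow> c \<le> y"
    using y by (auto simp: cut_block_def)
  have "\<not> y < q"
  proof
    assume "y < q"
    then have "q \<in> C" using cuts q_dvd xq x by (auto simp: dyadic_cuts_def)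
    then show False using same_side[of q] xq \<open>y < q\<close> by simp
  qed
  moreover have "\<not> q + 2^Suc r \<le> y"
  proof
    assume "q + 2^Suc r \<le> y"
    then have "q + 2^Suc r \<in> C" using cuts q_dvd yn by (auto simp: dyadic_cuts_def)
    then show False using same_side[of "q + 2^Suc r"] xq \<open>q + 2^Suc r \<le> y\<close> by simp
  qed
  ultimately show "y \<in> {q..<q + 2^Suc r}" by simp
qed

lemma le_of_dvd_le_add:
  fixes l c z j :: nat
  assumes "l dvd c" "l dvd z" "c \<le> z + j" "j < l"
  shows "c \<le> z"
proof -
  obtain a b where ab: "c = l * a" "z = l * b" using assms(1,2) by (auto elim!: dvdE)
  have "l * a < l * (b + 1)" using assms(3,4) ab by simp
  then have "a \<le> b" by (simp only: mult_less_cancel1) simp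
  then show ?thesis using ab by simp
qed

lemma cut_block_dyadic_run:
  assumes cuts: "dyadic_cuts n r C" and z: "z < n" "z = 0 \<or> z \<in> C"
    and last: "n - 1 \<notin> cut_block n C z" and j: "j < 2^r"
  shows "z + j < n" and "z + j \<in> cut_block n C z"
proof -
  have "2^r dvd z" using z cuts by (auto simp: dyadic_cuts_def)
  then have run: "z + k \<in> cut_block n C z" if "k < 2^r" "z + k < n" for k
    using le_of_dvd_le_add[of "2^r" _ z k] cuts that by (auto simp: dyadic_cuts_def cut_block_def)
  show "z + j < n"
  proof (rule ccontr)
    assume "\<not> z + j < n"
    then have "n - 1 \<in> cut_block n C z" using run[of "n - 1 - z"] j z by simp
    then show False using last by simp
  qed
  then show "z + j \<in> cut_block n C z" using run j by simp
qed

lemma cut_block_entry_point: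
  assumes p: "p < n" and enter: "(p + 1) mod n \<in> cut_block n C y" and before: "p \<notin> cut_block n C y"
  shows "(p + 1) mod n = 0 \<or> (p + 1) mod n \<in> C"
proof (cases "p + 1 = n")
  case False
  then have p1: "(p + 1) mod n = p + 1" "p + 1 < n" using p by auto
  then have "p \<notin> cut_block n C (p + 1)" using before enter cut_block_eq by metis
  then obtain c where "c \<in> C" "\<not> (c \<le> p + 1 \<longleftrightarrow> c \<le> p)" using p by (auto simp: cut_block_def)
  then have "c = p + 1" by auto
  then show ?thesis using p1 \<open>c \<in> C\<close> by simp
qed simp

text \<open>A walk that enters a block avoiding \<open>n - 1\<close> from outside enters it at an
  aligned position, so it stays inside for \<open>2^r\<close> steps.\<close>
lemma cyclic_walk_stays_in_block:
  assumes cuts: "dyadic_cuts n r C" and B: "B \<in> cut_blocks n C" "n - 1 \<notin> B"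
    and enter: "(p + 1) mod n \<in> B" and before: "p mod n \<notin> B" and j: "j < 2^r"
  shows "(p + 1 + j) mod n \<in> B"
proof -
  define z where "z = (p + 1) mod n"
  have "n > 0" using B by (auto simp: cut_blocks_def)
  have Bz: "B = cut_block n C z" using cut_blocks_eq_cut_block B enter by (simp add: z_def)
  have "z = (p mod n + 1) mod n" by (simp add: z_def mod_Suc_eq)
  then have "z = 0 \<or> z \<in> C"
    using cut_block_entry_point[of "p mod n" n C z] enter before Bz \<open>n > 0\<close>
    by (simp add: z_def)
  then have "z + j < n" "z + j \<in> B"
    using cut_block_dyadic_run[OF cuts _ _ _ j] Bz B \<open>n > 0\<close> by (auto simp: z_def)
  moreover have "(p + 1 + j) mod n = (z + j) mod n" by (simp add: z_def mod_add_left_eq)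
  ultimately show ?thesis by simp
qed

lemma card_le_3_if_separated:
  fixes T :: "nat set"
  assumes T: "T \<subseteq> {..<2 * l}"
    and sep: "\<And>t t'. t \<in> T \<Longrightarrow> t' \<in> T \<Longrightarrow> 0 < t \<Longrightarrow> t < t' \<Longrightarrow> t + l \<le> t'"
  shows "card T \<le> 3"
proof (rule ccontr)
  assume "\<not> card T \<le> 3"
  moreover have fin: "finite T" using T finite_subset by blast
  moreover have "card T \<le> card (T - {0}) + 1"
    using fin by (cases "0 \<in> T") (auto simp: card_Diff_singleton_if card_gt_0_iff)
  ultimately have "card (T - {0}) \<ge> 3" by linarith
  then obtain U where "U \<subseteq> T - {0}" "card U = 3" by (meson obtain_subset_with_card_n)
  then obtain a b c where abc: "a \<in> T - {0}" "b \<in> T - {0}" "c \<in> T - {0}" "a \<noteq> b" "a \<noteq> c" "b \<noteq> c"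
    unfolding card_3_iff by auto
  have apart: "t + l \<le> t' \<or> t' + l \<le> t" if "t \<in> T - {0}" "t' \<in> T - {0}" "t \<noteq> t'" for t t'
    using sep[of t t'] sep[of t' t] that by (cases "t < t'") auto
  have "a < 2 * l" "b < 2 * l" "c < 2 * l" using abc T by auto
  then show False using apart[OF abc(1,2,4)] apart[OF abc(1,3,5)] apart[OF abc(2,3,6)] by auto
qed

text \<open>The block containing \<open>n - 1\<close> is left out: it may be shorter than \<open>2^r\<close>.\<close>
definition walk_blocks :: "nat \<Rightarrow> nat \<Rightarrow> nat set \<Rightarrow> nat \<Rightarrow> nat set set" where
  "walk_blocks n r C p = {B \<in> cut_blocks n C. n - 1 \<notin> B \<and> (\<exists>t < 2 * 2^r. (p + t) mod n \<in> B)}"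

definition offset_blocks :: "nat \<Rightarrow> nat set \<Rightarrow> nat set \<Rightarrow> nat \<Rightarrow> nat set set" where
  "offset_blocks n C S x0 =
     {B \<in> cut_blocks n C. \<exists>x\<in>cut_block n C x0. \<exists>y\<in>B. (y + n - x) mod n \<in> S}"

text \<open>Blocks are indexed by their first entry time; entry times after time 0 are \<open>2^r\<close> apart.\<close>
lemma card_walk_blocks_le_3:
  assumes cuts: "dyadic_cuts n r C"
  shows "card (walk_blocks n r C p) \<le> 3"
proof -
  define M where "M = walk_blocks n r C p"
  define w where "w t = (p + t) mod n" for t
  define \<tau> where "\<tau> B = (LEAST t. w t \<in> B)" for B
  have \<tau>: "\<tau> B < 2 * 2^r" "w (\<tau> B) \<in> B" "\<And>t. t < \<tau> B \<Longrightarrow> w t \<notin> B" if BM: "B \<in> M" for B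
  proof -
    obtain t where t: "t < 2 * 2^r" "w t \<in> B" using BM unfolding M_def walk_blocks_def w_def by blast
    show "\<tau> B < 2 * 2^r" using Least_le[of "\<lambda>t. w t \<in> B" t] t by (simp add: \<tau>_def)
    show "w (\<tau> B) \<in> B" using LeastI[of "\<lambda>t. w t \<in> B" t] t by (simp add: \<tau>_def)
    show "\<And>t. t < \<tau> B \<Longrightarrow> w t \<notin> B" using not_less_Least unfolding \<tau>_def by blast
  qed
  have same: "B = B'" if "B \<in> M" "B' \<in> M" "w t \<in> B" "w t \<in> B'" for B B' t
    using that cut_blocks_eq_cut_block unfolding M_def walk_blocks_def
    by (metis (no_types, lifting) mem_Collect_eq)
  have inj: "inj_on \<tau> M" by (rule inj_onI) (use same \<tau>(2) in metis)
  have sep: "\<tau> B + 2^r \<le> \<tau> B'" if BB': "B \<in> M" "B' \<in> M" "0 < \<tau> B" "\<tau> B < \<tau> B'" for B B'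
  proof (rule ccontr)
    assume "\<not> \<tau> B + 2^r \<le> \<tau> B'"
    define t where "t = \<tau> B - 1"
    have t: "\<tau> B = t + 1" using BB'(3) by (simp add: t_def)
    have "B \<in> cut_blocks n C" "n - 1 \<notin> B" using BB'(1) by (simp_all add: M_def walk_blocks_def)
    moreover have "(p + t + 1) mod n \<in> B" using \<tau>(2)[OF BB'(1)] by (simp add: w_def t)
    moreover have "(p + t) mod n \<notin> B" using \<tau>(3)[OF BB'(1), of t] by (simp add: w_def t)
    moreover have "\<tau> B' - \<tau> B < 2^r" using \<open>\<not> \<tau> B + 2^r \<le> \<tau> B'\<close> BB'(4) by linarith
    ultimately have "(p + t + 1 + (\<tau> B' - \<tau> B)) mod n \<in> B"
      by (rule cyclic_walk_stays_in_block[OF cuts])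
    moreover have "p + t + 1 + (\<tau> B' - \<tau> B) = p + \<tau> B'" using t BB'(4) by simp
    ultimately have "w (\<tau> B') \<in> B" unfolding w_def by (simp only:)
    then have "B = B'" using same BB' \<tau>(2) by blast
    then show False using BB' by simp
  qed
  have "card (\<tau> ` M) \<le> 3"
  proof (rule card_le_3_if_separated)
    show "\<tau> ` M \<subseteq> {..<2 * 2^r}" using \<tau>(1) by auto
    show "t + 2^r \<le> t'" if "t \<in> \<tau> ` M" "t' \<in> \<tau> ` M" "0 < t" "t < t'" for t t'
      using that sep by blast
  qed
  then show ?thesis using card_image[OF inj] by (simp add: M_def)
qed

text \<open>The neighbour \<open>y\<close> of \<open>x\<close> at offset \<open>s\<close> is visited by the walk from \<open>q + s\<close> at time
  \<open>x - q < 2^(r+1)\<close>.\<close>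
lemma offset_blocks_subset_walk_blocks:
  assumes cuts: "dyadic_cuts n r C" and x0: "x0 < n"
  defines "q \<equiv> x0 div 2^Suc r * 2^Suc r"
  shows "offset_blocks n C S x0 \<subseteq> insert (cut_block n C (n - 1)) (\<Union>s\<in>S. walk_blocks n r C (q + s))"
proof
  fix B assume "B \<in> offset_blocks n C S x0"
  then obtain x y where B: "B \<in> cut_blocks n C" and x: "x \<in> cut_block n C x0" and y: "y \<in> B"
    and s: "(y + n - x) mod n \<in> S" by (auto simp: offset_blocks_def)
  have "x < n" "y < n" using B x y cut_block_subset cut_blocks_subset_Pow by blast+
  moreover have "q \<le> x" "x < q + 2^Suc r"
    using cut_block_subset_dyadic_window[OF cuts x0] x by (auto simp: q_def)
  ultimately have "(q + (y + n - x) mod n + (x - q)) mod n = (x + (y + n - x) mod n) mod n"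
    by (simp add: add.commute)
  also have "\<dots> = y" using \<open>x < n\<close> \<open>y < n\<close> by (simp add: mod_add_right_eq)
  finally have "(q + (y + n - x) mod n + (x - q)) mod n \<in> B" using y by simp
  moreover have "x - q < 2 * 2^r" using \<open>q \<le> x\<close> \<open>x < q + 2^Suc r\<close> by simp
  ultimately have "n - 1 \<notin> B \<Longrightarrow> B \<in> walk_blocks n r C (q + (y + n - x) mod n)"
    using B unfolding walk_blocks_def by blast
  then show "B \<in> insert (cut_block n C (n - 1)) (\<Union>s\<in>S. walk_blocks n r C (q + s))"
    using s cut_blocks_eq_cut_block[OF B] by blast
qed

lemma card_offset_blocks_le:
  assumes cuts: "dyadic_cuts n r C" and "finite S" and x0: "x0 < n"
  shows "card (offset_blocks n C S x0) \<le> 3 * card S + 1"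
proof -
  define q where "q = x0 div 2^Suc r * 2^Suc r"
  have fin: "finite (\<Union>s\<in>S. walk_blocks n r C (q + s))"
    using \<open>finite S\<close> finite_cut_blocks by (simp add: walk_blocks_def)
  have "card (offset_blocks n C S x0)
      \<le> card (insert (cut_block n C (n - 1)) (\<Union>s\<in>S. walk_blocks n r C (q + s)))"
    using offset_blocks_subset_walk_blocks[OF cuts x0, of S] fin by (intro card_mono) (simp_all add: q_def)
  also have "\<dots> \<le> card (\<Union>s\<in>S. walk_blocks n r C (q + s)) + 1"
    using fin by (simp add: card_insert_if)
  also have "card (\<Union>s\<in>S. walk_blocks n r C (q + s)) \<le> (\<Sum>s\<in>S. card (walk_blocks n r C (q + s)))"
    using \<open>finite S\<close> by (rule card_UN_le)
  also have "\<dots> \<le> (\<Sum>s\<in>S. 3)"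
    using card_walk_blocks_le_3[OF cuts] by (intro sum_mono)
  finally show ?thesis by simp
qed

section \<open>Circulant graphs\<close>

lemma automorphism_funpow_edge_iff:
  assumes aut: "automorphism V E \<phi>" and "u \<in> V" "v \<in> V"
  shows "{(\<phi> ^^ k) u, (\<phi> ^^ k) v} \<in> E \<longleftrightarrow> {u, v} \<in> E"
proof (induction k)
  case (Suc k)
  have "bij_betw (\<phi> ^^ k) V V" using aut by (simp add: automorphism_def bij_betw_funpow)
  then have "(\<phi> ^^ k) u \<in> V" "(\<phi> ^^ k) v \<in> V" using assms(2,3) by (simp_all add: bij_betw_apply)
  then show ?case using Suc aut by (simp add: automorphism_def)
qed simp

lemma bij_betw_funpow_return:
  assumes "finite V" "v \<in> V" and bij: "bij_betw \<phi> V V"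
  obtains p where "0 < p" "(\<phi> ^^ p) v = v"
proof -
  define f where "f j = (\<phi> ^^ j) v" for j
  have fV: "f j \<in> V" for j unfolding f_def by (rule bij_betw_apply[OF bij_betw_funpow[OF bij] \<open>v \<in> V\<close>])
  have "\<not> inj_on f {..card V}"
  proof
    assume "inj_on f {..card V}"
    then have "card (f ` {..card V}) = Suc (card V)" by (simp add: card_image)
    moreover have "card (f ` {..card V}) \<le> card V" using fV \<open>finite V\<close> by (intro card_mono) auto
    ultimately show False by simp
  qed
  then obtain i j where "i < j" "f i = f j" unfolding inj_on_def by (metis linorder_neqE_nat)
  moreover have "f (i + k) = (\<phi> ^^ i) (f k)" for k by (simp add: f_def funpow_add)
  ultimately have "(\<phi> ^^ i) (f (j - i)) = (\<phi> ^^ i) v" by (metis f_def le_add_diff_inverse less_imp_le)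
  then have "f (j - i) = v"
    using bij_betw_imp_inj_on[OF bij_betw_funpow[OF bij]] fV \<open>v \<in> V\<close> by (auto dest: inj_onD)
  then show thesis using that[of "j - i"] \<open>i < j\<close> by (simp add: f_def)
qed

lemma bij_betw_orbit_enumeration:
  assumes "finite V" "v \<in> V" and bij: "bij_betw \<phi> V V" and orbit: "\<forall>w\<in>V. \<exists>j. (\<phi> ^^ j) v = w"
  shows "bij_betw (\<lambda>j. (\<phi> ^^ j) v) {..<card V} V" and "(\<phi> ^^ card V) v = v"
proof -
  define f where "f j = (\<phi> ^^ j) v" for j
  have fV: "f j \<in> V" for j unfolding f_def by (rule bij_betw_apply[OF bij_betw_funpow[OF bij] \<open>v \<in> V\<close>])
  have period: "\<exists>p. 0 < p \<and> f p = v"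
    using bij_betw_funpow_return[OF assms(1-3)] by (metis f_def)
  define p where "p = (LEAST p. 0 < p \<and> f p = v)"
  have p: "0 < p" "f p = v" using LeastI_ex[OF period] by (simp_all add: p_def)
  have "inj_on f {0..<p}" unfolding f_def
    by (rule inj_on_funpow_least) (use p not_less_Least in \<open>auto simp: p_def f_def\<close>)
  moreover have "f ` {0..<p} = V"
  proof
    show "V \<subseteq> f ` {0..<p}"
    proof
      fix w assume "w \<in> V"
      then obtain j where "f j = w" using orbit by (auto simp: f_def)
      moreover have "f (j mod p) = f j" unfolding f_def by (rule funpow_mod_eq) (use p(2) in \<open>simp add: f_def\<close>)
      ultimately have "f (j mod p) = w" by simp
      then show "w \<in> f ` {0..<p}" using p(1) by (auto intro!: image_eqI[of _ _ "j mod p"])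
    qed
  qed (use fV in auto)
  ultimately have "bij_betw f {0..<p} V" by (simp add: bij_betw_def)
  moreover have "card V = p" using \<open>inj_on f {0..<p}\<close> \<open>f ` {0..<p} = V\<close> card_image by fastforce
  ultimately show "bij_betw (\<lambda>j. (\<phi> ^^ j) v) {..<card V} V" "(\<phi> ^^ card V) v = v"
    using p(2) by (simp_all add: f_def[abs_def] atLeast0LessThan)
qed

lemma automorphism_orbit_edge_shift:
  assumes aut: "automorphism V E \<phi>" and "v \<in> V" and period: "(\<phi> ^^ n) v = v"
    and ij: "i < n" "j < n" and edge: "{(\<phi> ^^ i) v, (\<phi> ^^ j) v} \<in> E"
  shows "{v, (\<phi> ^^ ((j + n - i) mod n)) v} \<in> E"
proof -
  have bij: "bij_betw \<phi> V V" using aut by (simp add: automorphism_def)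
  have orbit: "(\<phi> ^^ k) v \<in> V" for k by (rule bij_betw_apply[OF bij_betw_funpow[OF bij] \<open>v \<in> V\<close>])
  have shift: "(\<phi> ^^ k) ((\<phi> ^^ l) v) = (\<phi> ^^ (k + l)) v" for k l by (simp add: funpow_add)
  have "{(\<phi> ^^ (n - i)) ((\<phi> ^^ i) v), (\<phi> ^^ (n - i)) ((\<phi> ^^ j) v)} \<in> E"
    using automorphism_funpow_edge_iff[OF aut orbit orbit] edge by blast
  moreover have "(\<phi> ^^ (n - i)) ((\<phi> ^^ i) v) = v"
    using period ij(1) by (simp add: shift)
  moreover have "(\<phi> ^^ (n - i)) ((\<phi> ^^ j) v) = (\<phi> ^^ ((j + n - i) mod n)) v"
  proof -
    have "n - i + j = j + n - i" using ij(1) by simp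
    then have "(\<phi> ^^ (n - i)) ((\<phi> ^^ j) v) = (\<phi> ^^ (j + n - i)) v" by (simp add: shift)
    also have "\<dots> = (\<phi> ^^ ((j + n - i) mod n)) v" by (rule funpow_mod_eq[symmetric]) (rule period)
    finally show ?thesis .
  qed
  ultimately show ?thesis by simp
qed

lemma degree_eq_card_labels:
  assumes f: "bij_betw f {..<n} V"
  shows "degree V E u = card {d. d < n \<and> {u, f d} \<in> E}"
proof -
  let ?L = "{d. d < n \<and> {u, f d} \<in> E}"
  have "{w \<in> V. {u, w} \<in> E} = f ` ?L"
  proof
    show "{w \<in> V. {u, w} \<in> E} \<subseteq> f ` ?L"
    proof
      fix w assume w: "w \<in> {w \<in> V. {u, w} \<in> E}"
      then have "w \<in> f ` {..<n}" using bij_betw_imp_surj_on[OF f] by simp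
      then obtain d where "d < n" "w = f d" by blast
      then show "w \<in> f ` ?L" using w by blast
    qed
    show "f ` ?L \<subseteq> {w \<in> V. {u, w} \<in> E}"
    proof
      fix w assume "w \<in> f ` ?L"
      then obtain d where "d < n" "{u, f d} \<in> E" "w = f d" by blast
      then show "w \<in> {w \<in> V. {u, w} \<in> E}" using bij_betw_apply[OF f] by simp
    qed
  qed
  then have "degree V E u = card (f ` ?L)" by (simp add: degree_def)
  also have "\<dots> = card ?L"
    by (rule card_image, rule inj_on_subset[OF bij_betw_imp_inj_on[OF f]]) auto
  finally show ?thesis .
qed

lemma degree_le_max_degree: "finite V \<Longrightarrow> v \<in> V \<Longrightarrow> degree V E v \<le> max_degree V E"
  unfolding max_degree_def by (intro Max_ge) auto

lemma circulant_cyclic_labelling: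
  assumes "finite V" "circulant V E"
  obtains f S where "bij_betw f {..<card V} V" "finite S" "card S \<le> max_degree V E"
    "\<And>i j. i < card V \<Longrightarrow> j < card V \<Longrightarrow> {f i, f j} \<in> E \<Longrightarrow> (j + card V - i) mod card V \<in> S"
proof (cases "V = {}")
  case True
  then show thesis by (intro that[of "\<lambda>_. undefined" "{}"]) (simp_all add: bij_betw_def)
next
  case False
  then obtain v where "v \<in> V" by blast
  obtain \<phi> where aut: "automorphism V E \<phi>" and orbit: "\<forall>w\<in>V. \<exists>j. (\<phi> ^^ j) v = w"
    using assms(2) \<open>v \<in> V\<close> by (auto simp: circulant_def)
  have bij: "bij_betw \<phi> V V" using aut by (simp add: automorphism_def)
  define n where "n = card V"
  define f where "f = (\<lambda>j. (\<phi> ^^ j) v)"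
  have f: "bij_betw f {..<n} V" and period: "(\<phi> ^^ n) v = v"
    using bij_betw_orbit_enumeration[OF assms(1) \<open>v \<in> V\<close> bij orbit] by (simp_all add: f_def n_def)
  define S where "S = {d. d < n \<and> {v, f d} \<in> E}"
  have "card S = degree V E v" unfolding S_def by (rule degree_eq_card_labels[OF f, symmetric])
  also have "\<dots> \<le> max_degree V E" by (rule degree_le_max_degree[OF assms(1) \<open>v \<in> V\<close>])
  finally have "card S \<le> max_degree V E" .
  moreover have "(j + n - i) mod n \<in> S" if "i < n" "j < n" "{f i, f j} \<in> E" for i j
    using automorphism_orbit_edge_shift[OF aut \<open>v \<in> V\<close> period that[unfolded f_def]] \<open>i < n\<close>
    by (simp add: S_def f_def)
  moreover have "finite S" by (simp add: S_def)
  ultimately show thesis using f by (intro that) (simp_all add: n_def)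
qed

section \<open>Contraction sequences\<close>

lemma tww_le_of_red_degree_le:
  assumes cs: "contraction_sequence V P" and fin: "\<And>i. finite (P i)"
    and red: "\<And>i U. U \<in> P i \<Longrightarrow> quot_red_degree B R (P i) U \<le> d"
  shows "tww V B R \<le> d"
proof -
  have "max_quot_red_degree B R (P i) \<le> d" for i
    unfolding max_quot_red_degree_def using fin red by (intro Max.boundedI) auto
  then have "cs_width V B R P \<le> d"
    unfolding cs_width_def by (intro Max.boundedI) auto
  moreover have "tww V B R \<le> cs_width V B R P"
    unfolding tww_def using cs by (metis (mono_tags, lifting) Least_le)
  ultimately show ?thesis by simp
qed

lemma quot_red_degree_le_card_adjacent:
  assumes "finite P"
  shows "quot_red_degree B R P U \<le> card {W \<in> P. \<exists>u\<in>U. \<exists>w\<in>W. {u, w} \<in> B \<union> R}"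
  unfolding quot_red_degree_def quot_red_def quot_nonadj_def using assms by (intro card_mono) auto

lemma contraction_sequence_image:
  assumes cs: "contraction_sequence A Q" and inj: "inj_on f A" and parts: "\<And>i. Q i \<subseteq> Pow A"
  shows "contraction_sequence (f ` A) (\<lambda>i. (`) f ` Q i)"
  unfolding contraction_sequence_def
proof (intro conjI allI impI)
  have "Q (card A) = (\<lambda>v. {v}) ` A" using cs by (simp add: contraction_sequence_def)
  then show "(`) f ` Q (card (f ` A)) = (\<lambda>v. {v}) ` f ` A"
    using card_image[OF inj] by (simp add: image_image)
next
  have injP: "inj_on ((`) f) (Pow A)" using inj by (rule inj_on_image_Pow)
  fix i assume "1 \<le> i \<and> i < card (f ` A)"
  then have "1 \<le> i \<and> i < card A" using card_image[OF inj] by simp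
  then have "\<exists>X\<in>Q (Suc i). \<exists>Y\<in>Q (Suc i). X \<noteq> Y \<and> Q i = (Q (Suc i) - {X, Y}) \<union> {X \<union> Y}"
    using cs unfolding contraction_sequence_def by blast
  then obtain X Y where XY: "X \<in> Q (Suc i)" "Y \<in> Q (Suc i)" "X \<noteq> Y"
    and merge: "Q i = (Q (Suc i) - {X, Y}) \<union> {X \<union> Y}"
    by blast
  have "Q (Suc i) - {X, Y} \<subseteq> Pow A" "{X, Y} \<subseteq> Pow A" using parts XY by auto
  then have "(`) f ` (Q (Suc i) - {X, Y}) = (`) f ` Q (Suc i) - (`) f ` {X, Y}"
    by (rule inj_on_image_set_diff[OF injP])
  then have "(`) f ` Q i = ((`) f ` Q (Suc i) - {f ` X, f ` Y}) \<union> {f ` X \<union> f ` Y}"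
    unfolding merge by (simp add: image_Un)
  moreover have "f ` X \<noteq> f ` Y"
  proof
    assume "f ` X = f ` Y"
    then have "X = Y" by (rule inj_onD[OF injP]) (use \<open>{X, Y} \<subseteq> Pow A\<close> in simp_all)
    then show False using XY(3) by simp
  qed
  moreover have "f ` X \<in> (`) f ` Q (Suc i)" "f ` Y \<in> (`) f ` Q (Suc i)" using XY by simp_all
  ultimately show "\<exists>X'\<in>(`) f ` Q (Suc i). \<exists>Y'\<in>(`) f ` Q (Suc i). X' \<noteq> Y' \<and>
      (`) f ` Q i = ((`) f ` Q (Suc i) - {X', Y'}) \<union> {X' \<union> Y'}"
    by (intro bexI[of _ "f ` X"] bexI[of _ "f ` Y"] conjI[of "f ` X \<noteq> f ` Y"])
qed

lemma quot_red_degree_cyclic_cut_blocks_le: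
  assumes edges: "\<And>i j. i < n \<Longrightarrow> j < n \<Longrightarrow> {f i, f j} \<in> E \<Longrightarrow> (j + n - i) mod n \<in> S"
    and "finite S" and cuts: "dyadic_cuts n r C" and x0: "x0 < n"
  shows "quot_red_degree {} E ((`) f ` cut_blocks n C) (f ` cut_block n C x0) \<le> 3 * card S + 1"
proof -
  let ?P = "(`) f ` cut_blocks n C"
  have adjacent: "{W \<in> ?P. \<exists>u\<in>f ` cut_block n C x0. \<exists>w\<in>W. {u, w} \<in> {} \<union> E}
      \<subseteq> (`) f ` offset_blocks n C S x0"
  proof
    fix W assume W: "W \<in> {W \<in> ?P. \<exists>u\<in>f ` cut_block n C x0. \<exists>w\<in>W. {u, w} \<in> {} \<union> E}"
    then obtain B where B: "B \<in> cut_blocks n C" "W = f ` B" by blast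
    obtain u w where u: "u \<in> f ` cut_block n C x0" and w: "w \<in> W" and "{u, w} \<in> E"
      using W by blast
    then obtain x y where xy: "x \<in> cut_block n C x0" "y \<in> B" "{f x, f y} \<in> E"
      using B(2) by blast
    moreover have "x < n" "y < n" using xy B cut_block_subset cut_blocks_subset_Pow by blast+
    ultimately have "B \<in> offset_blocks n C S x0"
      using B(1) edges unfolding offset_blocks_def by blast
    then show "W \<in> (`) f ` offset_blocks n C S x0" unfolding B(2) by (rule imageI)
  qed
  have fin: "finite (offset_blocks n C S x0)"
    using finite_cut_blocks by (simp add: offset_blocks_def)
  have "quot_red_degree {} E ?P (f ` cut_block n C x0)
      \<le> card {W \<in> ?P. \<exists>u\<in>f ` cut_block n C x0. \<exists>w\<in>W. {u, w} \<in> {} \<union> E}"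
    by (rule quot_red_degree_le_card_adjacent) (simp add: finite_cut_blocks)
  also have "\<dots> \<le> card ((`) f ` offset_blocks n C S x0)"
    using adjacent fin by (intro card_mono finite_imageI)
  also have "\<dots> \<le> card (offset_blocks n C S x0)" using fin by (rule card_image_le)
  also have "\<dots> \<le> 3 * card S + 1" using card_offset_blocks_le[OF cuts \<open>finite S\<close> x0] .
  finally show ?thesis .
qed

lemma stww_le_of_cyclic_labelling:
  fixes f :: "nat \<Rightarrow> 'a"
  assumes f: "bij_betw f {..<n} V" and "finite S"
    and edges: "\<And>i j. i < n \<Longrightarrow> j < n \<Longrightarrow> {f i, f j} \<in> E \<Longrightarrow> (j + n - i) mod n \<in> S"
  shows "stww V E \<le> 3 * card S + 1"
proof -
  obtain Q where cs: "contraction_sequence {..<n} Q"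
    and dyadic: "\<And>i. \<exists>C r. dyadic_cuts n r C \<and> Q i = cut_blocks n C"
    using dyadic_contraction_sequence[of n] by blast
  define P where "P = (\<lambda>i. (`) f ` Q i)"
  have Q: "Q i \<subseteq> Pow {..<n}" "finite (Q i)" for i
    using dyadic[of i] cut_blocks_subset_Pow finite_cut_blocks by (metis)+
  have "contraction_sequence (f ` {..<n}) P"
    unfolding P_def by (rule contraction_sequence_image[OF cs bij_betw_imp_inj_on[OF f] Q(1)])
  then have "contraction_sequence V P" using bij_betw_imp_surj_on[OF f] by simp
  moreover have "finite (P i)" for i using Q(2) by (simp add: P_def)
  moreover have "quot_red_degree {} E (P i) U \<le> 3 * card S + 1" if "U \<in> P i" for i U
  proof -
    obtain C r where cuts: "dyadic_cuts n r C" and "Q i = cut_blocks n C" using dyadic by blast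
    moreover obtain x0 where "x0 < n" "U = f ` cut_block n C x0"
      using \<open>U \<in> P i\<close> \<open>Q i = cut_blocks n C\<close> by (auto simp: P_def cut_blocks_def)
    ultimately show ?thesis
      using quot_red_degree_cyclic_cut_blocks_le[OF edges \<open>finite S\<close> cuts] by (simp add: P_def)
  qed
  ultimately show ?thesis unfolding stww_def by (rule tww_le_of_red_degree_le)
qed

theorem mainTheorem3:
  fixes V :: "'a set" and E :: "'a set set"
  assumes "simple_graph V E" and "circulant V E"
  shows "stww V E \<le> 3 * max_degree V E + 1"
proof -
  have "finite V" using assms(1) by (simp add: simple_graph_def)
  obtain f S where "bij_betw f {..<card V} V" "finite S" "card S \<le> max_degree V E"
    and "\<And>i j. i < card V \<Longrightarrow> j < card V \<Longrightarrow> {f i, f j} \<in> E \<Longrightarrow> (j + card V - i) mod card V \<in> S"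
    using circulant_cyclic_labelling[OF \<open>finite V\<close> assms(2)] by blast
  then have "stww V E \<le> 3 * card S + 1" by (intro stww_le_of_cyclic_labelling)
  with \<open>card S \<le> max_degree V E\<close> show ?thesis by linarith
qed

end
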